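(* Let $(W,\omega^W)$ be a vertex operator algebra. The map $\pi:\operatorname{ScAlg}(W,\omega^W)\to\operatorname{Sc}(W,\omega^W)$, $(V,\omega^V)\mapsto\omega^V$, restricts to a bijection from $\overline{\operatorname{S}(W,\omega^W)}$ onto $\operatorname{Sc}(W,\omega^W)$, whose inverse is $\omega'\mapsto (C_W(C_W(\langle\omega'\rangle)),\omega')$.
   Context: For a vertex operator algebra $(W,\omega^W)$ with $Y(v,z)=\sum_n v_nz^{-n-1}$ and $Y(\omega^W,z)=\sum_n L^W(n)z^{-n-2}$: a vertex operator subalgebra $(V,\omega^V)$ (a vertex subalgebra $V\ni\mathbf 1$ with a vector $\omega^V\in V$ making it a vertex operator algebra, possibly with a different conformal vector) is semi-conformal if $L^W(n)|_V=L^V(n)|_V$ for all $n\ge0$; $\omega^V$ is then called a semi-conformal vector. $\operatorname{ScAlg}(W,\omega^W)$ is the set of semi-conformal subalgebras, $\operatorname{Sc}(W,\omega^W)$ the set of semi-conformal vectors. For a vertex subalgebra $U$, the commutant is $C_W(U)=\{v\in W: u_nv=0\ \forall u\in U,\ n\ge 0\}$. $\langle\omega'\rangle$ denotes the vertex subalgebra generated by $\omega'$ and $\mathbf 1$. $\overline{\operatorname{S}(W,\omega^W)}=\{(V,\omega')\in\operatorname{ScAlg}(W,\omega^W): C_W(C_W(V))=V\}$ (the conformally closed semi-conformal subalgebras). *)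

theory Defs
  imports Complex_Main
begin

text \<open>
  A VOA is given on a carrier set V (a subspace), together with the vacuum vac,
  the modes Y u n v (= u_n v, where Y(u,z) = sum_n u_n z^(-n-1)) and a conformal
  vector om, so that L(n) = om_(n+1).  Axioms follow Frenkel-Lepowsky-Meurman /
  Lepowsky-Li; the Jacobi identity is given in component (Borcherds) form.
\<close>

definition L_op :: "('v \<Rightarrow> int \<Rightarrow> 'v \<Rightarrow> 'v) \<Rightarrow> 'v \<Rightarrow> int \<Rightarrow> 'v \<Rightarrow> 'v" where
  "L_op Y om n v = Y om (n + 1) v"

definition wt_space ::
  "(complex \<Rightarrow> 'v::ab_group_add \<Rightarrow> 'v) \<Rightarrow> 'v set \<Rightarrow> ('v \<Rightarrow> int \<Rightarrow> 'v \<Rightarrow> 'v) \<Rightarrow> 'v \<Rightarrow> int \<Rightarrow> 'v set" where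
  "wt_space sc V Y om n = {v \<in> V. L_op Y om 0 v = sc (of_int n) v}"

definition is_VOA ::
  "(complex \<Rightarrow> 'v::ab_group_add \<Rightarrow> 'v) \<Rightarrow> 'v set \<Rightarrow> 'v \<Rightarrow> ('v \<Rightarrow> int \<Rightarrow> 'v \<Rightarrow> 'v) \<Rightarrow> 'v \<Rightarrow> bool" where
  "is_VOA sc V vac Y om \<longleftrightarrow>
     vector_space sc \<and> module.subspace sc V \<and>
     \<comment> \<open>bilinearity and closure\<close>
     (\<forall>u\<in>V. \<forall>v\<in>V. \<forall>n. Y u n v \<in> V) \<and>
     (\<forall>a b. \<forall>u\<in>V. \<forall>u'\<in>V. \<forall>n. \<forall>v\<in>V. Y (sc a u + sc b u') n v = sc a (Y u n v) + sc b (Y u' n v)) \<and>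
     (\<forall>a b. \<forall>u\<in>V. \<forall>v\<in>V. \<forall>v'\<in>V. \<forall>n. Y u n (sc a v + sc b v') = sc a (Y u n v) + sc b (Y u n v')) \<and>
     \<comment> \<open>truncation\<close>
     (\<forall>u\<in>V. \<forall>v\<in>V. \<exists>N. \<forall>n\<ge>N. Y u n v = 0) \<and>
     \<comment> \<open>vacuum\<close>
     vac \<in> V \<and>
     (\<forall>v\<in>V. \<forall>n. Y vac n v = (if n = -1 then v else 0)) \<and>
     (\<forall>u\<in>V. Y u (-1) vac = u \<and> (\<forall>n\<ge>0. Y u n vac = 0)) \<and>
     \<comment> \<open>Jacobi identity (Borcherds identity), sums over i \<ge> 0 which are finite by truncation\<close>
     (\<forall>u\<in>V. \<forall>v\<in>V. \<forall>w\<in>V. \<forall>l m n::int. \<exists>N. \<forall>M\<ge>N.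
        (\<Sum>i\<le>M. sc ((of_int m :: complex) gchoose i) (Y (Y u (l + int i) v) (m + n - int i) w))
        = (\<Sum>i\<le>M. sc ((-1) ^ i * ((of_int l :: complex) gchoose i))
              (Y u (m + l - int i) (Y v (n + int i) w)
               - sc ((-1) powi l) (Y v (n + l - int i) (Y u (m + int i) w))))) \<and>
     \<comment> \<open>conformal vector: Virasoro relations with some central charge\<close>
     om \<in> V \<and>
     (\<exists>c::complex. \<forall>m n::int. \<forall>v\<in>V.
        L_op Y om m (L_op Y om n v) - L_op Y om n (L_op Y om m v)
        = sc (of_int (m - n)) (L_op Y om (m + n) v)
          + (if m + n = 0 then sc ((of_int m ^ 3 - of_int m) / 12 * c) v else 0)) \<and>
     \<comment> \<open>L(-1)-derivative property: Y(L(-1)u,z) = d/dz Y(u,z)\<close>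
     (\<forall>u\<in>V. \<forall>n. \<forall>v\<in>V. Y (L_op Y om (-1) u) n v = sc (- of_int n) (Y u (n - 1) v)) \<and>
     \<comment> \<open>Z-grading by L(0): V is the (direct) sum of the L(0)-eigenspaces V_n\<close>
     (\<forall>v\<in>V. \<exists>S f. finite S \<and> (\<forall>n\<in>S. f n \<in> wt_space sc V Y om n) \<and> v = sum f S) \<and>
     (\<forall>n. \<exists>B. finite B \<and> wt_space sc V Y om n \<subseteq> module.span sc B) \<and>
     (\<exists>N. \<forall>n<N. wt_space sc V Y om n = {0}) \<and>
     om \<in> wt_space sc V Y om 2"

definition vertex_subalgebra ::
  "(complex \<Rightarrow> 'v::ab_group_add \<Rightarrow> 'v) \<Rightarrow> 'v set \<Rightarrow> 'v \<Rightarrow> ('v \<Rightarrow> int \<Rightarrow> 'v \<Rightarrow> 'v) \<Rightarrow> 'v set \<Rightarrow> bool" where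
  "vertex_subalgebra sc W vac Y U \<longleftrightarrow>
     U \<subseteq> W \<and> module.subspace sc U \<and> vac \<in> U \<and> (\<forall>u\<in>U. \<forall>v\<in>U. \<forall>n. Y u n v \<in> U)"

definition commutant ::
  "'v::ab_group_add set \<Rightarrow> ('v \<Rightarrow> int \<Rightarrow> 'v \<Rightarrow> 'v) \<Rightarrow> 'v set \<Rightarrow> 'v set" where
  "commutant W Y U = {v \<in> W. \<forall>u\<in>U. \<forall>n\<ge>0. Y u n v = 0}"

definition generated_subalgebra ::
  "(complex \<Rightarrow> 'v::ab_group_add \<Rightarrow> 'v) \<Rightarrow> 'v set \<Rightarrow> 'v \<Rightarrow> ('v \<Rightarrow> int \<Rightarrow> 'v \<Rightarrow> 'v) \<Rightarrow> 'v \<Rightarrow> 'v set" where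
  "generated_subalgebra sc W vac Y x = \<Inter>{U. vertex_subalgebra sc W vac Y U \<and> x \<in> U}"

definition ScAlg ::
  "(complex \<Rightarrow> 'v::ab_group_add \<Rightarrow> 'v) \<Rightarrow> 'v set \<Rightarrow> 'v \<Rightarrow> ('v \<Rightarrow> int \<Rightarrow> 'v \<Rightarrow> 'v) \<Rightarrow> 'v \<Rightarrow> ('v set \<times> 'v) set" where
  "ScAlg sc W vac Y omW = {(V, omV).
      vertex_subalgebra sc W vac Y V \<and> omV \<in> V \<and> is_VOA sc V vac Y omV \<and>
      (\<forall>n\<ge>0. \<forall>v\<in>V. L_op Y omW n v = L_op Y omV n v)}"

definition Sc ::
  "(complex \<Rightarrow> 'v::ab_group_add \<Rightarrow> 'v) \<Rightarrow> 'v set \<Rightarrow> 'v \<Rightarrow> ('v \<Rightarrow> int \<Rightarrow> 'v \<Rightarrow> 'v) \<Rightarrow> 'v \<Rightarrow> 'v set" where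
  "Sc sc W vac Y omW = snd ` ScAlg sc W vac Y omW"

definition ScClosed ::
  "(complex \<Rightarrow> 'v::ab_group_add \<Rightarrow> 'v) \<Rightarrow> 'v set \<Rightarrow> 'v \<Rightarrow> ('v \<Rightarrow> int \<Rightarrow> 'v \<Rightarrow> 'v) \<Rightarrow> 'v \<Rightarrow> ('v set \<times> 'v) set" where
  "ScClosed sc W vac Y omW =
     {p \<in> ScAlg sc W vac Y omW. commutant W Y (commutant W Y (fst p)) = fst p}"

end

theory Submission
  imports Defs
begin

text \<open>
  If \<open>(V, \<omega>')\<close> is semi-conformal, then \<open>\<omega>'\<^sub>0\<close> and \<open>\<omega>\<^sub>0\<close> agree on \<open>V\<close> (both are \<open>L(-1)\<close>), and
  the \<open>L(-1)\<close>-derivative property turns \<open>\<omega>'\<^sub>0 v = 0\<close> into the vanishing of all \<open>u\<^sub>n v\<close>,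
  \<open>n \<ge> 0\<close>, \<open>u \<in> V\<close>; hence \<open>C\<^sub>W(V) = C\<^sub>W(\<langle>\<omega>'\<rangle>)\<close>, and a conformally closed \<open>V\<close> is determined
  by \<open>\<omega>'\<close>. Conversely \<open>\<omega> - \<omega>'\<close> lies in \<open>C\<^sub>W(V)\<close>, so \<open>\<omega>'\<close> is semi-conformal on the whole
  double commutant \<open>C\<^sub>W(C\<^sub>W(\<langle>\<omega>'\<rangle>))\<close>. The latter is a vertex operator algebra with conformal
  vector \<open>\<omega>'\<close>: the Virasoro relations of \<open>\<omega>'\<close> are determined by the products \<open>\<omega>'\<^sub>i \<omega>'\<close> and
  so hold on all of \<open>W\<close>, and the \<open>L(0)\<close>-grading of \<open>W\<close> restricts to every \<open>L(0)\<close>-stable subspace.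
\<close>

definition virasoro_relations ::
  "(complex \<Rightarrow> 'v::ab_group_add \<Rightarrow> 'v) \<Rightarrow> 'v set \<Rightarrow> ('v \<Rightarrow> int \<Rightarrow> 'v \<Rightarrow> 'v) \<Rightarrow> 'v \<Rightarrow> complex \<Rightarrow> bool" where
  "virasoro_relations sc V Y om c \<longleftrightarrow> (\<forall>m n::int. \<forall>v\<in>V.
     L_op Y om m (L_op Y om n v) - L_op Y om n (L_op Y om m v)
     = sc (of_int (m - n)) (L_op Y om (m + n) v)
       + (if m + n = 0 then sc ((of_int m ^ 3 - of_int m) / 12 * c) v else 0))"

lemma virasoro_relations_mono:
  "virasoro_relations sc V Y om c \<Longrightarrow> U \<subseteq> V \<Longrightarrow> virasoro_relations sc U Y om c"
  unfolding virasoro_relations_def by blast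

locale vertex_operator_algebra =
  fixes sc :: "complex \<Rightarrow> 'v::ab_group_add \<Rightarrow> 'v"
    and W :: "'v set" and vac :: 'v and Y :: "'v \<Rightarrow> int \<Rightarrow> 'v \<Rightarrow> 'v" and om :: 'v
  assumes is_VOA: "is_VOA sc W vac Y om"
begin

sublocale vector_space sc
  using is_VOA by (simp add: is_VOA_def)

lemma subspace_carrier: "subspace W"
  using is_VOA by (simp add: is_VOA_def)

lemma Y_closed: "u \<in> W \<Longrightarrow> v \<in> W \<Longrightarrow> Y u n v \<in> W"
  using is_VOA by (simp add: is_VOA_def)

lemma Y_linear_left:
  "u \<in> W \<Longrightarrow> u' \<in> W \<Longrightarrow> v \<in> W \<Longrightarrow> Y (sc a u + sc b u') n v = sc a (Y u n v) + sc b (Y u' n v)"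
  using is_VOA by (simp add: is_VOA_def)

lemma Y_linear_right:
  "u \<in> W \<Longrightarrow> v \<in> W \<Longrightarrow> v' \<in> W \<Longrightarrow> Y u n (sc a v + sc b v') = sc a (Y u n v) + sc b (Y u n v')"
  using is_VOA by (simp add: is_VOA_def)

lemma Y_truncation: "u \<in> W \<Longrightarrow> v \<in> W \<Longrightarrow> \<exists>N. \<forall>n\<ge>N. Y u n v = 0"
  using is_VOA by (simp add: is_VOA_def)

lemma vac_mem: "vac \<in> W"
  using is_VOA by (simp add: is_VOA_def)

lemma Y_vac: "v \<in> W \<Longrightarrow> Y vac n v = (if n = -1 then v else 0)"
  using is_VOA by (simp add: is_VOA_def)

lemma Y_create: "u \<in> W \<Longrightarrow> Y u (-1) vac = u"
  using is_VOA by (simp add: is_VOA_def)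

lemma Y_nonneg_vac: "u \<in> W \<Longrightarrow> n \<ge> 0 \<Longrightarrow> Y u n vac = 0"
  using is_VOA by (simp add: is_VOA_def)

lemma borcherds_identity:
  "u \<in> W \<Longrightarrow> v \<in> W \<Longrightarrow> w \<in> W \<Longrightarrow> \<exists>N. \<forall>M\<ge>N.
     (\<Sum>i\<le>M. sc ((of_int m :: complex) gchoose i) (Y (Y u (l + int i) v) (m + n - int i) w))
     = (\<Sum>i\<le>M. sc ((-1) ^ i * ((of_int l :: complex) gchoose i))
          (Y u (m + l - int i) (Y v (n + int i) w)
           - sc ((-1) powi l) (Y v (n + l - int i) (Y u (m + int i) w))))"
  using is_VOA unfolding is_VOA_def by blast

lemma conformal_mem: "om \<in> W"
  using is_VOA by (simp add: is_VOA_def)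

lemma virasoro: "\<exists>c. virasoro_relations sc W Y om c"
  using is_VOA by (simp add: is_VOA_def virasoro_relations_def)

lemma L_minus1_derivative: "u \<in> W \<Longrightarrow> v \<in> W \<Longrightarrow> Y (Y om 0 u) n v = sc (- of_int n) (Y u (n - 1) v)"
  using is_VOA unfolding is_VOA_def L_op_def by auto

lemma weight_decomposition:
  "v \<in> W \<Longrightarrow> \<exists>S f. finite S \<and> (\<forall>n\<in>S. f n \<in> wt_space sc W Y om n) \<and> v = sum f S"
  using is_VOA by (simp add: is_VOA_def)

lemma weight_space_finite_dim: "\<exists>B. finite B \<and> wt_space sc W Y om n \<subseteq> span B"
  using is_VOA by (simp add: is_VOA_def)

lemma weight_spaces_vanish_below: "\<exists>N. \<forall>n<N. wt_space sc W Y om n = {0}"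
  using is_VOA by (simp add: is_VOA_def)

lemma zero_mem: "0 \<in> W"
  using subspace_carrier subspace_0 by blast

lemma Y_zero_right: "u \<in> W \<Longrightarrow> Y u n 0 = 0"
  using Y_linear_right[of u 0 0 n 0 0] zero_mem by simp

lemma Y_zero_left: "v \<in> W \<Longrightarrow> Y 0 n v = 0"
  using Y_linear_left[of 0 0 v 0 0 n] zero_mem by simp

lemma Y_scale_left: "u \<in> W \<Longrightarrow> v \<in> W \<Longrightarrow> Y (sc a u) n v = sc a (Y u n v)"
  using Y_linear_left[of u u v a 0 n] by simp

lemma Y_scale_right: "u \<in> W \<Longrightarrow> v \<in> W \<Longrightarrow> Y u n (sc a v) = sc a (Y u n v)"
  using Y_linear_right[of u v v n a 0] by simp

lemma Y_diff_left: "u \<in> W \<Longrightarrow> u' \<in> W \<Longrightarrow> v \<in> W \<Longrightarrow> Y (u - u') n v = Y u n v - Y u' n v"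
  using Y_linear_left[of u u' v 1 "-1" n] by simp

lemma Y_add_right: "u \<in> W \<Longrightarrow> v \<in> W \<Longrightarrow> v' \<in> W \<Longrightarrow> Y u n (v + v') = Y u n v + Y u n v'"
  using Y_linear_right[of u v v' n 1 1] by simp

lemma Y_sum_right:
  assumes "u \<in> W" and "finite S" and "\<And>k. k \<in> S \<Longrightarrow> f k \<in> W"
  shows "Y u n (sum f S) = (\<Sum>k\<in>S. Y u n (f k))"
  using assms(2,3)
proof (induction S rule: finite_induct)
  case empty
  then show ?case using assms(1) by (simp add: Y_zero_right)
next
  case (insert x F)
  have "sum f F \<in> W"
    using insert.prems by (intro subspace_sum[OF subspace_carrier]) simp
  then show ?case using insert assms(1) by (simp add: Y_add_right)
qed

lemma commutator_formula:
  assumes "u \<in> W" "v \<in> W" "w \<in> W"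
  shows "\<exists>N. \<forall>M\<ge>N. Y u m (Y v n w) - Y v n (Y u m w)
           = (\<Sum>i\<le>M. sc ((of_int m :: complex) gchoose i) (Y (Y u (int i) v) (m + n - int i) w))"
proof -
  obtain N where N: "\<forall>M\<ge>N.
      (\<Sum>i\<le>M. sc ((of_int m :: complex) gchoose i) (Y (Y u (0 + int i) v) (m + n - int i) w))
      = (\<Sum>i\<le>M. sc ((-1) ^ i * ((of_int 0 :: complex) gchoose i))
           (Y u (m + 0 - int i) (Y v (n + int i) w)
            - sc ((-1) powi 0) (Y v (n + 0 - int i) (Y u (m + int i) w))))"
    using borcherds_identity[OF assms, of m 0 n] by blast
  then show ?thesis
    by (intro exI[of _ N]) (simp add: gbinomial_0_left sum.atMost_shift)
qed

lemma commute_if_nonneg_modes_vanish: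
  assumes "u \<in> W" "v \<in> W" "w \<in> W" and "\<And>i. i \<ge> 0 \<Longrightarrow> Y u i v = 0"
  shows "Y u m (Y v n w) = Y v n (Y u m w)"
proof -
  obtain N where "Y u m (Y v n w) - Y v n (Y u m w)
      = (\<Sum>i\<le>N. sc ((of_int m :: complex) gchoose i) (Y (Y u (int i) v) (m + n - int i) w))"
    using commutator_formula[OF assms(1-3), of m n] by blast
  also have "\<dots> = 0" using assms by (simp add: Y_zero_left)
  finally show ?thesis by simp
qed

lemma Y_zero_mode_bracket:
  assumes "u \<in> W" "v \<in> W" "w \<in> W"
  shows "Y (Y u 0 v) n w = Y u 0 (Y v n w) - Y v n (Y u 0 w)"
proof -
  obtain N where "Y u 0 (Y v n w) - Y v n (Y u 0 w)
      = (\<Sum>i\<le>N. sc ((of_int 0 :: complex) gchoose i) (Y (Y u (int i) v) (0 + n - int i) w))"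
    using commutator_formula[OF assms, of 0 n] by blast
  then show ?thesis by (simp add: gbinomial_0_left sum.atMost_shift)
qed

text \<open>Commute past the vacuum: \<open>x\<^sub>-\<^sub>1 v\<^sub>n \<one> = v\<^sub>n x\<^sub>-\<^sub>1 \<one> = v\<^sub>n x\<close>.\<close>
lemma nonneg_modes_vanish_sym:
  assumes "x \<in> W" "v \<in> W" and "\<And>i. i \<ge> 0 \<Longrightarrow> Y x i v = 0" and "n \<ge> 0"
  shows "Y v n x = 0"
proof -
  have "Y x (-1) (Y v n vac) = Y v n (Y x (-1) vac)"
    using assms(1-3) vac_mem by (intro commute_if_nonneg_modes_vanish) auto
  then show ?thesis using assms Y_nonneg_vac Y_create Y_zero_right by simp
qed

text \<open>Since \<open>x\<^sub>0\<close> acts as \<open>L(-1)\<close> on \<open>u\<close> and kills \<open>v\<close>, the vanishing of \<open>u\<^sub>k v\<close>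
  forces \<open>k u\<^sub>k\<^sub>-\<^sub>1 v = 0\<close>; truncation then propagates downwards.\<close>
lemma nonneg_modes_vanish_if_translation_kills:
  assumes x: "x \<in> W" and u: "u \<in> W" and v: "v \<in> W"
    and translation: "Y x 0 u = Y om 0 u" and kills: "Y x 0 v = 0" and j: "j \<ge> 0"
  shows "Y u j v = 0"
proof -
  have descend: "Y u (k - 1) v = 0" if "k \<ge> 1" "Y u k v = 0" for k
  proof -
    have "Y (Y om 0 u) k v = Y x 0 (Y u k v) - Y u k (Y x 0 v)"
      using Y_zero_mode_bracket[OF x u v] translation by simp
    also have "\<dots> = 0" using that kills x u by (simp add: Y_zero_right)
    finally have "sc (- of_int k) (Y u (k - 1) v) = 0"
      using L_minus1_derivative[OF u v] by simp
    moreover have "(- of_int k :: complex) \<noteq> 0" using that(1) by simp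
    ultimately show ?thesis by simp
  qed
  obtain N where N: "\<forall>n\<ge>N. Y u n v = 0" using Y_truncation[OF u v] by blast
  have "k \<ge> 0 \<longrightarrow> Y u k v = 0" if "k \<le> max N j" for k
    using that
  proof (induction k rule: int_le_induct)
    case base
    then show ?case using N by simp
  next
    case (step i)
    then show ?case using descend[of i] by force
  qed
  then show ?thesis using j by simp
qed

lemma commutant_subset: "commutant W Y X \<subseteq> W"
  by (auto simp: commutant_def)

lemma commutant_antimono: "X \<subseteq> X' \<Longrightarrow> commutant W Y X' \<subseteq> commutant W Y X"
  by (auto simp: commutant_def)

lemma commutant_vertex_subalgebra:
  assumes X: "X \<subseteq> W"
  shows "vertex_subalgebra sc W vac Y (commutant W Y X)"
proof -
  have "subspace (commutant W Y X)"
    unfolding subspace_def commutant_def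
    using X subspace_carrier zero_mem
    by (auto simp: Y_zero_right Y_add_right Y_scale_right subspace_add subspace_scale)
  moreover have "vac \<in> commutant W Y X"
    using X vac_mem Y_nonneg_vac by (auto simp: commutant_def)
  moreover have "Y u n v \<in> commutant W Y X"
    if u: "u \<in> commutant W Y X" and v: "v \<in> commutant W Y X" for u v n
  proof -
    have "Y x k (Y u n v) = 0" if x: "x \<in> X" and k: "k \<ge> 0" for x k
    proof -
      have "Y x k (Y u n v) = Y u n (Y x k v)"
        using u v x X by (intro commute_if_nonneg_modes_vanish) (auto simp: commutant_def)
      then show ?thesis using u v x k by (simp add: commutant_def Y_zero_right)
    qed
    then show ?thesis using u v by (auto simp: commutant_def Y_closed)
  qed
  ultimately show ?thesis
    unfolding vertex_subalgebra_def using commutant_subset by blast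
qed

lemma subset_double_commutant:
  assumes "X \<subseteq> W"
  shows "X \<subseteq> commutant W Y (commutant W Y X)"
  using assms nonneg_modes_vanish_sym by (auto simp: commutant_def)

lemma triple_commutant:
  assumes "X \<subseteq> W"
  shows "commutant W Y (commutant W Y (commutant W Y X)) = commutant W Y X"
  using commutant_antimono[OF subset_double_commutant[OF assms]]
    subset_double_commutant[OF commutant_subset] by blast

lemma mem_generated_subalgebra: "x \<in> generated_subalgebra sc W vac Y x"
  by (simp add: generated_subalgebra_def)

lemma generated_subalgebra_least:
  "vertex_subalgebra sc W vac Y U \<Longrightarrow> x \<in> U \<Longrightarrow> generated_subalgebra sc W vac Y x \<subseteq> U"
  by (auto simp: generated_subalgebra_def)

text \<open>Applying \<open>L(0) - x\<close> removes the weight-\<open>x\<close> component and rescales the others by nonzero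
  factors, so induction on the set of weights applies.\<close>
lemma weight_components_mem:
  assumes U: "subspace U" "U \<subseteq> W" and L0_closed: "\<And>u. u \<in> U \<Longrightarrow> Y om 1 u \<in> U"
  shows "finite S \<Longrightarrow> (\<And>k. k \<in> S \<Longrightarrow> f k \<in> wt_space sc W Y om k) \<Longrightarrow> sum f S \<in> U
    \<Longrightarrow> k \<in> S \<Longrightarrow> f k \<in> U"
proof (induction S arbitrary: f k rule: finite_induct)
  case empty
  then show ?case by simp
next
  case (insert x F)
  have fW: "f k \<in> W" and f_eigen: "Y om 1 (f k) = sc (of_int k) (f k)" if "k \<in> insert x F" for k
    using insert.prems(1)[OF that] by (auto simp: wt_space_def L_op_def)
  define g where "g k = sc (of_int k - of_int x) (f k)" for k
  have g_weight: "g k \<in> wt_space sc W Y om k" if "k \<in> F" for k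
    using that fW f_eigen subspace_scale[OF subspace_carrier]
    by (simp add: wt_space_def L_op_def g_def Y_scale_right[OF conformal_mem] mult.commute)
  have "Y om 1 (sum f (insert x F)) = (\<Sum>k\<in>insert x F. sc (of_int k) (f k))"
    using Y_sum_right[OF conformal_mem, of "insert x F" f] insert.hyps(1) fW f_eigen by simp
  then have "Y om 1 (sum f (insert x F)) - sc (of_int x) (sum f (insert x F))
        = (\<Sum>k\<in>insert x F. g k)"
    by (simp add: scale_sum_right g_def scale_left_diff_distrib sum_subtractf)
  also have "\<dots> = sum g F"
    using insert.hyps by (simp add: g_def)
  finally have "sum g F \<in> U"
    using insert.prems(2) L0_closed U(1) by (metis subspace_diff subspace_scale)
  then have gU: "g k \<in> U" if "k \<in> F" for k
    using insert.IH g_weight that by blast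
  have fU: "f k \<in> U" if "k \<in> F" for k
  proof -
    have "of_int k - of_int x \<noteq> (0::complex)" using that insert.hyps(2) by auto
    then have "f k = sc (1 / (of_int k - of_int x)) (g k)" by (simp add: g_def)
    then show ?thesis using gU[OF that] subspace_scale[OF U(1)] by metis
  qed
  have "f x = sum f (insert x F) - sum f F"
    using insert.hyps by simp
  then have "f x \<in> U"
    using insert.prems(2) subspace_sum[OF U(1)] fU subspace_diff[OF U(1)] by metis
  then show ?case using insert.prems(3) fU by blast
qed

lemma weight_decomposition_stable:
  assumes U: "subspace U" "U \<subseteq> W" and L0_closed: "\<And>u. u \<in> U \<Longrightarrow> Y om 1 u \<in> U" and v: "v \<in> U"
  shows "\<exists>S f. finite S \<and> (\<forall>n\<in>S. f n \<in> wt_space sc W Y om n \<inter> U) \<and> v = sum f S"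
proof -
  obtain S f where "finite S" and "\<forall>n\<in>S. f n \<in> wt_space sc W Y om n" and "v = sum f S"
    using weight_decomposition v U(2) by blast
  moreover have "f n \<in> U" if "n \<in> S" for n
    using weight_components_mem[OF U L0_closed] calculation v that by blast
  ultimately show ?thesis by blast
qed

text \<open>The relation \<open>[L(m), L(-2)] \<one> = (m + 2) L(m - 2) \<one> + \<dots>\<close> with \<open>L(-2) \<one> = x\<close>.\<close>
lemma conformal_self_products:
  assumes x: "x \<in> W" and "vac \<in> U" and vir: "virasoro_relations sc U Y x c" and i: "i \<ge> 1"
  shows "Y x i x = (if i = 1 then sc 2 x else if i = 3 then sc (c / 2) vac else 0)"
proof -
  define m where "m = i - 1"
  have "Y x (m + 1) (Y x (-2 + 1) vac) - Y x (-2 + 1) (Y x (m + 1) vac)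
        = sc (of_int (m - -2)) (Y x (m + -2 + 1) vac)
          + (if m + -2 = 0 then sc ((of_int m ^ 3 - of_int m) / 12 * c) vac else 0)"
    using vir \<open>vac \<in> U\<close> unfolding virasoro_relations_def L_op_def by blast
  moreover have "Y x (-1) vac = x" "Y x (m + 1) vac = 0"
    using x i Y_create Y_nonneg_vac by (auto simp: m_def)
  ultimately have e: "Y x i x = sc (of_int (m + 2)) (Y x (m - 1) vac)
        + (if m = 2 then sc ((of_int m ^ 3 - of_int m) / 12 * c) vac else 0)"
    using x Y_zero_right by (simp add: m_def algebra_simps)
  consider "m = 0" | "m = 1" | "m = 2" | "m \<ge> 3" using i m_def by linarith
  then show ?thesis
  proof cases
    case 1 then show ?thesis using e x Y_create by (simp add: m_def)
  next
    case 2 then show ?thesis using e x Y_nonneg_vac[of x 0] by (simp add: m_def)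
  next
    case 3
    then have "Y x i x = sc ((8 - 2) / 12 * c) vac" using e x Y_nonneg_vac[of x 1] by simp
    then show ?thesis using 3 by (simp add: m_def)
  next
    case 4 then show ?thesis using e x Y_nonneg_vac[of x "m - 1"] by (simp add: m_def)
  qed
qed

lemma gbinomial_3: "(a :: complex) gchoose 3 = a * (a - 1) * (a - 2) / 6"
  by (simp add: gbinomial_Suc numeral_3_eq_3 atLeastAtMostSuc_conv fact_numeral algebra_simps)

text \<open>Conversely the self-products determine the commutator \<open>[x\<^sub>m\<^sub>+\<^sub>1, x\<^sub>n\<^sub>+\<^sub>1]\<close> on all of \<open>W\<close>: only
  the terms \<open>i = 0, 1, 3\<close> of the commutator formula survive.\<close>
lemma virasoro_relations_of_self_products:
  assumes x: "x \<in> W" and translation: "Y x 0 x = Y om 0 x"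
    and products: "\<And>i. i \<ge> 1 \<Longrightarrow> Y x i x = (if i = 1 then sc 2 x else if i = 3 then sc (c / 2) vac else 0)"
  shows "virasoro_relations sc W Y x c"
  unfolding virasoro_relations_def L_op_def
proof (intro allI ballI)
  fix m n :: int and w assume w: "w \<in> W"
  define T where "T i = sc ((of_int (m + 1) :: complex) gchoose i)
    (Y (Y x (int i) x) ((m + 1) + (n + 1) - int i) w)" for i
  obtain N where N: "\<forall>M\<ge>N. Y x (m + 1) (Y x (n + 1) w) - Y x (n + 1) (Y x (m + 1) w) = (\<Sum>i\<le>M. T i)"
    using commutator_formula[OF x x w, of "m + 1" "n + 1"] unfolding T_def by blast
  have "T i = 0" if "i \<notin> {0, 1, 3}" for i
    using that products[of "int i"] Y_zero_left[OF w] by (simp add: T_def)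
  then have "(\<Sum>i\<le>max N 3. T i) = T 0 + T 1 + T 3"
    by (subst sum.mono_neutral_right[of "{..max N 3}" "{0, 1, 3}"]) auto
  then have commutator: "Y x (m + 1) (Y x (n + 1) w) - Y x (n + 1) (Y x (m + 1) w) = T 0 + T 1 + T 3"
    using N[rule_format, of "max N 3"] by simp
  have "T 0 = sc (- of_int (m + n + 2)) (Y x (m + n + 1) w)"
    unfolding T_def using translation L_minus1_derivative[OF x w, of "m + 1 + (n + 1)"]
    by (simp add: algebra_simps)
  moreover have "T 1 = sc (of_int (m + 1) * 2) (Y x (m + n + 1) w)"
    unfolding T_def using products[of 1] Y_scale_left[OF x w] by (simp add: algebra_simps)
  ultimately have "T 0 + T 1 = sc (of_int (m - n)) (Y x (m + n + 1) w)"
    by (simp add: scale_left_distrib[symmetric])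
  moreover have "T 3 = (if m + n = 0 then sc ((of_int m ^ 3 - of_int m) / 12 * c) w else 0)"
  proof -
    have "T 3 = sc (((of_int (m + 1) :: complex) gchoose 3) * (c / 2)) (if m + n = 0 then w else 0)"
      unfolding T_def using products[of 3] Y_scale_left[OF vac_mem w] Y_vac[OF w] by simp
    moreover have "((of_int (m + 1) :: complex) gchoose 3) * (c / 2) = (of_int m ^ 3 - of_int m) / 12 * c"
      unfolding gbinomial_3 by (simp add: field_simps power3_eq_cube)
    ultimately show ?thesis by simp
  qed
  ultimately show "Y x (m + 1) (Y x (n + 1) w) - Y x (n + 1) (Y x (m + 1) w)
      = sc (of_int (m - n)) (Y x (m + n + 1) w)
        + (if m + n = 0 then sc ((of_int m ^ 3 - of_int m) / 12 * c) w else 0)"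
    using commutator by (simp add: add.assoc)
qed

lemma semiconformal_subalgebra_is_VOA:
  assumes U: "vertex_subalgebra sc W vac Y U" and x: "x \<in> U"
    and vir: "virasoro_relations sc U Y x c"
    and semi: "\<And>u n. u \<in> U \<Longrightarrow> n \<ge> 0 \<Longrightarrow> Y x n u = Y om n u"
  shows "is_VOA sc U vac Y x"
proof -
  have UW: "U \<subseteq> W" and U_subspace: "subspace U" and vac_U: "vac \<in> U"
    and U_closed: "\<And>u v n. u \<in> U \<Longrightarrow> v \<in> U \<Longrightarrow> Y u n v \<in> U"
    using U by (auto simp: vertex_subalgebra_def)
  have xW: "x \<in> W" using x UW by blast
  have weight_spaces: "wt_space sc U Y x n \<subseteq> wt_space sc W Y om n" for n
    using UW semi by (auto simp: wt_space_def L_op_def)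
  have derivative: "Y (L_op Y x (-1) u) n v = sc (- of_int n) (Y u (n - 1) v)"
    if "u \<in> U" "v \<in> U" for u v n
    using that UW semi[of u 0] L_minus1_derivative[of u v n] by (auto simp: L_op_def)
  have grading: "\<exists>S f. finite S \<and> (\<forall>n\<in>S. f n \<in> wt_space sc U Y x n) \<and> v = sum f S"
    if "v \<in> U" for v
  proof -
    have "Y om 1 u \<in> U" if "u \<in> U" for u
      using U_closed[OF x that, of 1] semi[OF that, of 1] by simp
    moreover have "wt_space sc W Y om n \<inter> U \<subseteq> wt_space sc U Y x n" for n
      using semi[of _ 1] by (auto simp: wt_space_def L_op_def)
    ultimately show ?thesis
      using weight_decomposition_stable[OF U_subspace UW _ that] by blast
  qed
  have "0 \<in> wt_space sc U Y x n" for n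
    using U_subspace subspace_0 xW by (auto simp: wt_space_def L_op_def Y_zero_right)
  then have vanish_below: "\<exists>N. \<forall>n<N. wt_space sc U Y x n = {0}"
    using weight_spaces_vanish_below weight_spaces by blast
  have "x \<in> wt_space sc U Y x 2"
    using x conformal_self_products[OF xW vac_U vir, of 1] by (simp add: wt_space_def L_op_def)
  moreover have "\<exists>B. finite B \<and> wt_space sc U Y x n \<subseteq> span B" for n
    using weight_space_finite_dim weight_spaces by (meson subset_trans)
  moreover have in_W: "\<And>u. u \<in> U \<Longrightarrow> u \<in> W" using UW by blast
  ultimately show ?thesis
    unfolding is_VOA_def virasoro_relations_def[symmetric]
    by (intro conjI ballI allI impI exI[of _ c])
      (use vector_space_axioms U_subspace U_closed vac_U x vir derivative grading vanish_below
         Y_linear_left[OF in_W in_W in_W] Y_linear_right[OF in_W in_W in_W] Y_truncation[OF in_W in_W]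
         Y_vac[OF in_W] Y_create[OF in_W] Y_nonneg_vac[OF in_W] borcherds_identity[OF in_W in_W in_W]
       in simp_all)
qed

end

locale semiconformal_subalgebra = vertex_operator_algebra +
  fixes V and omV
  assumes semiconformal: "(V, omV) \<in> ScAlg sc W vac Y om"
begin

lemma V_vertex_subalgebra: "vertex_subalgebra sc W vac Y V"
  using semiconformal by (simp add: ScAlg_def)

lemma V_subset: "V \<subseteq> W"
  using V_vertex_subalgebra by (simp add: vertex_subalgebra_def)

lemma omV_mem: "omV \<in> V"
  using semiconformal by (simp add: ScAlg_def)

lemma omV_mem_W: "omV \<in> W"
  using omV_mem V_subset by blast

lemma positive_modes_agree: "n \<ge> 1 \<Longrightarrow> v \<in> V \<Longrightarrow> Y omV n v = Y om n v"
  using semiconformal by (auto simp: ScAlg_def L_op_def dest!: spec[of _ "n - 1"])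

sublocale sub: vertex_operator_algebra sc V vac Y omV
  using semiconformal by unfold_locales (simp add: ScAlg_def)

text \<open>Both sides create the vector \<open>u\<^sub>-\<^sub>2 \<one>\<close> from the vacuum.\<close>
lemma translation_agrees:
  assumes u: "u \<in> V"
  shows "Y omV 0 u = Y om 0 u"
proof -
  have uW: "u \<in> W" using u V_subset by blast
  have "Y (Y omV 0 u) (-1) vac = Y (Y om 0 u) (-1) vac"
    using sub.L_minus1_derivative[OF u sub.vac_mem, of "-1"]
      L_minus1_derivative[OF uW vac_mem, of "-1"] by simp
  then show ?thesis
    using Y_create[OF Y_closed[OF omV_mem_W uW]] Y_create[OF Y_closed[OF conformal_mem uW]] by simp
qed

lemma commutant_eq_commutant_generated:
  "commutant W Y V = commutant W Y (generated_subalgebra sc W vac Y omV)"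
proof
  show "commutant W Y V \<subseteq> commutant W Y (generated_subalgebra sc W vac Y omV)"
    by (intro commutant_antimono generated_subalgebra_least V_vertex_subalgebra omV_mem)
  show "commutant W Y (generated_subalgebra sc W vac Y omV) \<subseteq> commutant W Y V"
  proof
    fix v assume v: "v \<in> commutant W Y (generated_subalgebra sc W vac Y omV)"
    then have vW: "v \<in> W" and kills: "Y omV 0 v = 0"
      using mem_generated_subalgebra by (auto simp: commutant_def)
    have "Y u n v = 0" if "u \<in> V" "n \<ge> 0" for u n
      using nonneg_modes_vanish_if_translation_kills[OF omV_mem_W _ vW translation_agrees[OF that(1)]
          kills that(2)] that(1) V_subset by blast
    then show "v \<in> commutant W Y V"
      using vW by (simp add: commutant_def)
  qed
qed

lemma conformal_difference_in_commutant: "om - omV \<in> commutant W Y V"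
proof -
  have "Y (om - omV) n u = 0" if "u \<in> V" "n \<ge> 0" for u n
    using that V_subset conformal_mem omV_mem_W translation_agrees positive_modes_agree[of n u]
    by (cases "n = 0") (auto simp: Y_diff_left)
  then show ?thesis
    using V_subset conformal_mem omV_mem_W subspace_diff[OF subspace_carrier]
      nonneg_modes_vanish_sym by (auto simp: commutant_def)
qed

lemma double_commutant_semiconformal:
  assumes "v \<in> commutant W Y (commutant W Y V)" and "n \<ge> 0"
  shows "Y omV n v = Y om n v"
proof -
  have "Y (om - omV) n v = 0"
    using assms conformal_difference_in_commutant by (auto simp: commutant_def)
  moreover have "v \<in> W"
    using assms(1) commutant_subset by blast
  ultimately show ?thesis
    using Y_diff_left[OF conformal_mem omV_mem_W] by simp
qed

lemma virasoro_on_W: "\<exists>c. virasoro_relations sc W Y omV c"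
proof -
  obtain c where c: "virasoro_relations sc V Y omV c"
    using sub.virasoro by blast
  have "virasoro_relations sc W Y omV c"
    by (rule virasoro_relations_of_self_products[OF omV_mem_W translation_agrees[OF omV_mem]
          conformal_self_products[OF omV_mem_W sub.vac_mem c]])
  then show ?thesis ..
qed

lemma double_commutant_ScClosed:
  "(commutant W Y (commutant W Y (generated_subalgebra sc W vac Y omV)), omV) \<in> ScClosed sc W vac Y om"
proof -
  define V' where "V' = commutant W Y (commutant W Y V)"
  have V'_subalgebra: "vertex_subalgebra sc W vac Y V'"
    unfolding V'_def by (intro commutant_vertex_subalgebra commutant_subset)
  have omV_V': "omV \<in> V'"
    unfolding V'_def using subset_double_commutant[OF V_subset] omV_mem by blast
  obtain c where c: "virasoro_relations sc W Y omV c"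
    using virasoro_on_W by blast
  have "is_VOA sc V' vac Y omV"
  proof (rule semiconformal_subalgebra_is_VOA[OF V'_subalgebra omV_V'])
    show "virasoro_relations sc V' Y omV c"
      using virasoro_relations_mono[OF c] commutant_subset by (simp add: V'_def)
    show "Y omV n u = Y om n u" if "u \<in> V'" "n \<ge> 0" for u n
      using double_commutant_semiconformal that by (simp add: V'_def)
  qed
  then have "(V', omV) \<in> ScAlg sc W vac Y om"
    using V'_subalgebra omV_V' double_commutant_semiconformal
    by (simp add: ScAlg_def L_op_def V'_def)
  then show ?thesis
    using triple_commutant[OF commutant_subset] commutant_eq_commutant_generated
    by (simp add: ScClosed_def V'_def)
qed

end

context vertex_operator_algebra
begin

lemma ScClosed_iff:
  "p \<in> ScClosed sc W vac Y om \<longleftrightarrow> snd p \<in> Sc sc W vac Y om \<and>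
     p = (commutant W Y (commutant W Y (generated_subalgebra sc W vac Y (snd p))), snd p)"
proof
  assume p: "p \<in> ScClosed sc W vac Y om"
  then interpret semiconformal_subalgebra sc W vac Y om "fst p" "snd p"
    by unfold_locales (simp add: ScClosed_def)
  show "snd p \<in> Sc sc W vac Y om \<and>
     p = (commutant W Y (commutant W Y (generated_subalgebra sc W vac Y (snd p))), snd p)"
    using p commutant_eq_commutant_generated by (auto simp: ScClosed_def Sc_def prod_eq_iff)
next
  assume p: "snd p \<in> Sc sc W vac Y om \<and>
     p = (commutant W Y (commutant W Y (generated_subalgebra sc W vac Y (snd p))), snd p)"
  then obtain V where "(V, snd p) \<in> ScAlg sc W vac Y om"
    by (auto simp: Sc_def)
  then interpret semiconformal_subalgebra sc W vac Y om V "snd p"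
    by unfold_locales
  show "p \<in> ScClosed sc W vac Y om"
    using p double_commutant_ScClosed by metis
qed

end

theorem proposition2p1:
  fixes sc :: "complex \<Rightarrow> 'v::ab_group_add \<Rightarrow> 'v"
    and W :: "'v set" and vac :: 'v and Y :: "'v \<Rightarrow> int \<Rightarrow> 'v \<Rightarrow> 'v" and omW :: 'v
  assumes "is_VOA sc W vac Y omW"
  shows "bij_betw snd (ScClosed sc W vac Y omW) (Sc sc W vac Y omW) \<and>
         (\<forall>om' \<in> Sc sc W vac Y omW.
            (commutant W Y (commutant W Y (generated_subalgebra sc W vac Y om')), om')
              \<in> ScClosed sc W vac Y omW \<and>
            the_inv_into (ScClosed sc W vac Y omW) snd om'
              = (commutant W Y (commutant W Y (generated_subalgebra sc W vac Y om')), om'))"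
proof -
  interpret vertex_operator_algebra sc W vac Y omW
    by (rule vertex_operator_algebra.intro) (rule assms)
  have inj: "inj_on snd (ScClosed sc W vac Y omW)"
  proof (rule inj_onI)
    fix p q assume "p \<in> ScClosed sc W vac Y omW" "q \<in> ScClosed sc W vac Y omW" "snd p = snd q"
    then show "p = q" using ScClosed_iff[of p] ScClosed_iff[of q] by simp
  qed
  have closed: "(commutant W Y (commutant W Y (generated_subalgebra sc W vac Y om')), om')
      \<in> ScClosed sc W vac Y omW" if "om' \<in> Sc sc W vac Y omW" for om'
    using that ScClosed_iff by simp
  have "snd ` ScClosed sc W vac Y omW = Sc sc W vac Y omW"
  proof
    show "snd ` ScClosed sc W vac Y omW \<subseteq> Sc sc W vac Y omW"
      using ScClosed_iff by blast
    show "Sc sc W vac Y omW \<subseteq> snd ` ScClosed sc W vac Y omW"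
      using closed by force
  qed
  then show ?thesis
    using inj closed the_inv_into_f_eq[OF inj _ closed] by (simp add: bij_betw_def)
qed

end
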